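(* Let $\beta\in(0,1]$, $m\ge0$ an integer, and $\theta=(k_r)$ a lacunary sequence. If $\liminf_{r\to\infty}\frac{h_r^\beta}{k_r}>0$, then $S(F,\Delta^m)\subset S_\theta^\beta(F,\Delta^m)$ (with the same limit).
   Context: A fuzzy number is a map $X:\mathbb{R}\to[0,1]$ which is normal, fuzzy convex, upper semicontinuous, with compact closure of $\{t:X(t)>0\}$; $L(\mathbb{R})$ is the set of fuzzy numbers. Level sets $[X]^\alpha=\{t:X(t)\ge\alpha\}$ ($\alpha\in(0,1]$), $[X]^0=\overline{\{t:X(t)>0\}}$, are compact intervals $[u^\alpha,v^\alpha]$. Subtraction: $[X-Y]^\alpha=[u_1^\alpha-v_2^\alpha,v_1^\alpha-u_2^\alpha]$. Metric: $d(X,Y)=\sup_{\alpha\in[0,1]}\max\{|u_1^\alpha-u_2^\alpha|,|v_1^\alpha-v_2^\alpha|\}$. $(\Delta^0X)_k=X_k$, $(\Delta^1X)_k=X_k-X_{k+1}$, $(\Delta^mX)_k=(\Delta^1(\Delta^{m-1}X))_k$. A lacunary sequence is an increasing integer sequence $\theta=(k_r)_{r\ge0}$ with $k_0=0$, $h_r=k_r-k_{r-1}\to\infty$; $I_r=(k_{r-1},k_r]$. $S_\theta^\beta(F,\Delta^m)$: sequences $X$ with some $X_0\in L(\mathbb{R})$ (the limit) such that for all $\varepsilon>0$, $\lim_r\frac{1}{h_r^\beta}|\{k\in I_r:d(\Delta^mX_k,X_0)\ge\varepsilon\}|=0$. $S(F,\Delta^m)$: sequences $X$ with some $X_0\in L(\mathbb{R})$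 (the limit) such that for all $\varepsilon>0$, $\lim_{n\to\infty}\frac{1}{n}|\{k\le n:d(\Delta^mX_k,X_0)\ge\varepsilon\}|=0$. *)

theory Defs
  imports "HOL-Analysis.Analysis"
begin

text \<open>Fuzzy numbers are represented by their membership functions of type real \<Rightarrow> real.\<close>

definition fuzzy_number :: "(real \<Rightarrow> real) \<Rightarrow> bool" where
  "fuzzy_number X \<longleftrightarrow>
     (\<forall>t. 0 \<le> X t \<and> X t \<le> 1) \<and>
     (\<exists>t. X t = 1) \<and>
     (\<forall>s t (l::real). 0 \<le> l \<and> l \<le> 1 \<longrightarrow> min (X s) (X t) \<le> X (l * s + (1 - l) * t)) \<and>
     (\<forall>a. open {t. X t < a}) \<and>
     compact (closure {t. X t > 0})"

definition level_set :: "(real \<Rightarrow> real) \<Rightarrow> real \<Rightarrow> real set" where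
  "level_set X \<alpha> = (if 0 < \<alpha> then {t. X t \<ge> \<alpha>} else closure {t. X t > 0})"

definition lower_end :: "(real \<Rightarrow> real) \<Rightarrow> real \<Rightarrow> real" where
  "lower_end X \<alpha> = Inf (level_set X \<alpha>)"

definition upper_end :: "(real \<Rightarrow> real) \<Rightarrow> real \<Rightarrow> real" where
  "upper_end X \<alpha> = Sup (level_set X \<alpha>)"

text \<open>Subtraction: the fuzzy number whose \<alpha>-level sets are
  [u1 - v2, v1 - u2]; membership value = largest level containing t.\<close>
definition fsub :: "(real \<Rightarrow> real) \<Rightarrow> (real \<Rightarrow> real) \<Rightarrow> (real \<Rightarrow> real)" where
  "fsub X Y = (\<lambda>t. Sup ({0} \<union> {\<alpha>. 0 < \<alpha> \<and> \<alpha> \<le> 1 \<and>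
       lower_end X \<alpha> - upper_end Y \<alpha> \<le> t \<and> t \<le> upper_end X \<alpha> - lower_end Y \<alpha>}))"

definition fdist :: "(real \<Rightarrow> real) \<Rightarrow> (real \<Rightarrow> real) \<Rightarrow> real" where
  "fdist X Y = (SUP \<alpha>\<in>{0..1}. max \<bar>lower_end X \<alpha> - lower_end Y \<alpha>\<bar> \<bar>upper_end X \<alpha> - upper_end Y \<alpha>\<bar>)"

fun fdiff :: "nat \<Rightarrow> (nat \<Rightarrow> real \<Rightarrow> real) \<Rightarrow> nat \<Rightarrow> real \<Rightarrow> real" where
  "fdiff 0 X = X"
| "fdiff (Suc m) X = (\<lambda>k. fsub (fdiff m X k) (fdiff m X (Suc k)))"

definition lacunary :: "(nat \<Rightarrow> nat) \<Rightarrow> bool" where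
  "lacunary \<theta> \<longleftrightarrow> strict_mono \<theta> \<and> \<theta> 0 = 0 \<and>
     filterlim (\<lambda>r. real (\<theta> (Suc r) - \<theta> r)) at_top sequentially"

text \<open>Sequences are indexed by k \<ge> 1 (index 0 is unused). h_(r+1) = \<theta>(r+1) - \<theta> r,
  I_(r+1) = {\<theta> r <.. \<theta> (r+1)}; limits in r are shifted by one.\<close>

definition stat_conv_diff :: "nat \<Rightarrow> (nat \<Rightarrow> real \<Rightarrow> real) \<Rightarrow> (real \<Rightarrow> real) \<Rightarrow> bool" where
  "stat_conv_diff m X L \<longleftrightarrow> fuzzy_number L \<and>
     (\<forall>\<epsilon>>0. (\<lambda>n. real (card {k\<in>{1..n}. fdist (fdiff m X k) L \<ge> \<epsilon>}) / real n)
               \<longlonglongrightarrow> 0)"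

definition lac_stat_conv_diff :: "real \<Rightarrow> (nat \<Rightarrow> nat) \<Rightarrow> nat \<Rightarrow> (nat \<Rightarrow> real \<Rightarrow> real) \<Rightarrow> (real \<Rightarrow> real) \<Rightarrow> bool" where
  "lac_stat_conv_diff \<beta> \<theta> m X L \<longleftrightarrow> fuzzy_number L \<and>
     (\<forall>\<epsilon>>0. (\<lambda>r. real (card {k\<in>{\<theta> r<..\<theta> (Suc r)}. fdist (fdiff m X k) L \<ge> \<epsilon>})
                  / (real (\<theta> (Suc r) - \<theta> r) powr \<beta>)) \<longlonglongrightarrow> 0)"

end

theory Submission
  imports Defs
begin

text \<open>Since the block \<open>I_r\<close> lies inside \<open>{1..k_r}\<close>, the exceptional indices in \<open>I_r\<close> number at most
  those in \<open>{1..k_r}\<close>; dividing by \<open>h_r^\<beta> > c k_r\<close> (eventually, for some \<open>c > 0\<close> below the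
  liminf) bounds the block density by \<open>1/c\<close> times the initial-segment density at \<open>k_r\<close>, which
  tends to zero along the subsequence \<open>k_r \<rightarrow> \<infinity>\<close>.\<close>

lemma eventually_gt_of_liminf_pos:
  assumes "liminf (\<lambda>r. ereal (f r)) > 0"
  obtains c :: real where "c > 0" and "eventually (\<lambda>r. c < f r) sequentially"
proof -
  obtain c where "0 < ereal c" and "ereal c < liminf (\<lambda>r. ereal (f r))"
    using ereal_dense2[OF assms] by blast
  then show thesis
    using that less_LiminfD by force
qed

lemma card_filter_block_le_initial:
  "card {k\<in>{a<..b}. P k} \<le> card {k\<in>{1..b::nat}. P k}"
  by (intro card_mono) auto

lemma block_density_le_initial_density:
  fixes w c :: real
  assumes "c > 0" and "c < w / real b"
  shows "real (card {k\<in>{a<..b}. P k}) / w \<le> (1 / c) * (real (card {k\<in>{1..b}. P k}) / real b)"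
proof -
  have "b > 0" using assms by (cases "b = 0") auto
  then have cb_lt_w: "c * real b < w" using assms(2) by (simp add: field_simps)
  have cb_pos: "c * real b > 0" using assms(1) \<open>b > 0\<close> by simp
  have "real (card {k\<in>{a<..b}. P k}) / w \<le> real (card {k\<in>{a<..b}. P k}) / (c * real b)"
    using cb_lt_w cb_pos by (intro divide_left_mono) auto
  also have "\<dots> \<le> real (card {k\<in>{1..b}. P k}) / (c * real b)"
    using cb_pos card_filter_block_le_initial by (intro divide_right_mono) auto
  finally show ?thesis by simp
qed

lemma block_density_tendsto_zero:
  fixes \<theta> :: "nat \<Rightarrow> nat" and w :: "nat \<Rightarrow> real"
  assumes density: "(\<lambda>n. real (card {k\<in>{1..n}. P k}) / real n) \<longlonglongrightarrow> 0"
    and "strict_mono \<theta>"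
    and "liminf (\<lambda>r. ereal (w r / real (\<theta> (Suc r)))) > 0"
  shows "(\<lambda>r. real (card {k\<in>{\<theta> r<..\<theta> (Suc r)}. P k}) / w r) \<longlonglongrightarrow> 0"
proof -
  obtain c where "c > 0" and c_below: "eventually (\<lambda>r. c < w r / real (\<theta> (Suc r))) sequentially"
    using eventually_gt_of_liminf_pos[OF assms(3)] by blast
  have "filterlim (\<lambda>r. \<theta> (Suc r)) sequentially sequentially"
    using \<open>strict_mono \<theta>\<close> by (intro filterlim_subseq) (simp add: strict_mono_def)
  then have "(\<lambda>r. real (card {k\<in>{1..\<theta> (Suc r)}. P k}) / real (\<theta> (Suc r))) \<longlonglongrightarrow> 0"
    using filterlim_compose[OF density] by blast
  then have upper: "(\<lambda>r. (1 / c) * (real (card {k\<in>{1..\<theta> (Suc r)}. P k}) / real (\<theta> (Suc r))))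
      \<longlonglongrightarrow> 0"
    by (rule tendsto_mult_right_zero)
  show ?thesis
  proof (rule tendsto_sandwich[OF _ _ tendsto_const upper])
    show "eventually (\<lambda>r. 0 \<le> real (card {k\<in>{\<theta> r<..\<theta> (Suc r)}. P k}) / w r) sequentially"
      using c_below
    proof eventually_elim
      case (elim r)
      then have "w r > 0"
        using \<open>c > 0\<close> by (smt (verit) divide_nonpos_nonneg of_nat_0_le_iff)
      then show ?case by simp
    qed
    show "eventually (\<lambda>r. real (card {k\<in>{\<theta> r<..\<theta> (Suc r)}. P k}) / w r
        \<le> (1 / c) * (real (card {k\<in>{1..\<theta> (Suc r)}. P k}) / real (\<theta> (Suc r)))) sequentially"
      using c_below by eventually_elim (rule block_density_le_initial_density[OF \<open>c > 0\<close>])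
  qed
qed

theorem theorem2p10:
  fixes \<beta> :: real and m :: nat and \<theta> :: "nat \<Rightarrow> nat"
    and X :: "nat \<Rightarrow> real \<Rightarrow> real" and L :: "real \<Rightarrow> real"
  assumes "0 < \<beta>" and "\<beta> \<le> 1"
    and "lacunary \<theta>"
    and "liminf (\<lambda>r. ereal (real (\<theta> (Suc r) - \<theta> r) powr \<beta> / real (\<theta> (Suc r)))) > 0"
    and "\<forall>k. fuzzy_number (X k)"
    and "stat_conv_diff m X L"
  shows "lac_stat_conv_diff \<beta> \<theta> m X L"
proof -
  have "strict_mono \<theta>" using assms(3) unfolding lacunary_def by blast
  have "fuzzy_number L" using assms(6) unfolding stat_conv_diff_def by blast
  moreover have "(\<lambda>r. real (card {k\<in>{\<theta> r<..\<theta> (Suc r)}. fdist (fdiff m X k) L \<ge> \<epsilon>})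
      / (real (\<theta> (Suc r) - \<theta> r) powr \<beta>)) \<longlonglongrightarrow> 0" if "\<epsilon> > 0" for \<epsilon>
    using assms(6) that \<open>strict_mono \<theta>\<close> assms(4) unfolding stat_conv_diff_def
    by (intro block_density_tendsto_zero) auto
  ultimately show ?thesis unfolding lac_stat_conv_diff_def by blast
qed

end
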